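(* Let $k\geq 0$ and \[F_k(x)=\sum_{l=0}^{k}B_{k-l}(x^{k+2})(x^{k+2}-1)^l\sum_{i=l}^{k}\binom{i}{l}x^{k+1-i}.\] For $0\le i\le k+1$ and $0\le j\le k+1$ let $f_k(i,j)$ denote the coefficient of $x^{(k+2)i+j}$ in $F_k(x)$. Then $f_k(i,0)=0$ for $0\leq i\leq k+1$, and $f_k(i,j+1)=t_k(i,j)$ for $0\leq i\leq k+1$ and $0\leq j\leq k$.
   Context: $B_n(y)=\sum_{\pi\in B_n}y^{\mathrm{des}_B(\pi)}$ is the type $B$ Eulerian polynomial: $B_n$ is the set of signed permutations $\pi_1\cdots\pi_n$ of $[n]$, and with $\pi_0=0$, $\mathrm{des}_B(\pi)$ counts $i\in\{0,\dots,n-1\}$ with $\pi_i>\pi_{i+1}$; $B_0=1$. Define \[\widetilde T_k(x)=\sum_{l=0}^{k}B_{k-l}(x^{k+1})(x^{k+1}-1)^l\sum_{i=l}^{k}\binom{i}{l}x^{k-i},\] and for $0\le i\le k+1$, $0\le j\le k$ let $t_k(i,j)$ be the coefficient of $x^{(k+1)i+j}$ in $\widetilde T_k(x)$. *)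

theory Defs
  imports "HOL-Computational_Algebra.Polynomial"
begin

definition signed_perms :: "nat \<Rightarrow> int list set" where
  "signed_perms n = {xs. length xs = n \<and> distinct (map abs xs) \<and> set (map abs xs) = {1..int n}}"

definition desB :: "int list \<Rightarrow> nat" where
  "desB xs = card {i. i < length xs \<and> (0 # xs) ! i > (0 # xs) ! (Suc i)}"

definition eulerB :: "nat \<Rightarrow> int poly" where
  "eulerB n = (\<Sum>xs\<in>signed_perms n. monom 1 (desB xs))"

definition Ttilde :: "nat \<Rightarrow> int poly" where
  "Ttilde k = (\<Sum>l=0..k. pcompose (eulerB (k - l)) (monom 1 (k+1))
      * (monom 1 (k+1) - 1) ^ l
      * (\<Sum>i=l..k. of_nat (i choose l) * monom 1 (k - i)))"

definition tk :: "nat \<Rightarrow> nat \<Rightarrow> nat \<Rightarrow> int" where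
  "tk k i j = coeff (Ttilde k) ((k+1)*i + j)"

definition Fk :: "nat \<Rightarrow> int poly" where
  "Fk k = (\<Sum>l=0..k. pcompose (eulerB (k - l)) (monom 1 (k+2))
      * (monom 1 (k+2) - 1) ^ l
      * (\<Sum>i=l..k. of_nat (i choose l) * monom 1 (k + 1 - i)))"

definition fk :: "nat \<Rightarrow> nat \<Rightarrow> nat \<Rightarrow> int" where
  "fk k i j = coeff (Fk k) ((k+2)*i + j)"

end

theory Submission
  imports Defs
begin

text \<open>Write \<open>E_l(y) = B_{k-l}(y) (y - 1)^l\<close> and \<open>Q_l(x) = \<Sum>_{i=l..k} (i choose l) x^{k-i}\<close>,
  a polynomial of degree at most \<open>k\<close>. Then \<open>F_k(x) = \<Sum>_l E_l(x^{k+2}) x Q_l(x)\<close> and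
  \<open>T~_k(x) = \<Sum>_l E_l(x^{k+1}) Q_l(x)\<close>. If \<open>deg R < n\<close> and \<open>j < n\<close>, the coefficient of
  \<open>x^{ni+j}\<close> in \<open>E(x^n) R(x)\<close> is \<open>[y^i]E \<cdot> [x^j]R\<close>, because the blocks of exponents
  contributed by the different powers of \<open>x^n\<close> do not overlap. So both sides of the
  claimed identities equal \<open>\<Sum>_l [y^i]E_l \<cdot> [x^j](x Q_l)\<close>, which is \<open>0\<close> for \<open>j = 0\<close>.\<close>

lemma coeff_pcompose_monom_mult:
  fixes P R :: "'a::comm_semiring_1 poly"
  assumes "degree R < n" and "j < n"
  shows "coeff (pcompose P (monom 1 n) * R) (n * i + j) = coeff P i * coeff R j"
  using assms
proof (induction P arbitrary: i)
  case 0
  then show ?case by simp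
next
  case (pCons a P)
  have expand: "pcompose (pCons a P) (monom 1 n) * R
      = smult a R + monom 1 n * (pcompose P (monom 1 n) * R)"
    by (simp add: pcompose_pCons algebra_simps)
  show ?case
  proof (cases i)
    case 0
    then show ?thesis using pCons.prems by (simp add: expand coeff_monom_mult)
  next
    case (Suc m)
    have "coeff R (n * i + j) = 0"
      using pCons.prems Suc by (intro coeff_eq_0) simp
    moreover have "n * i + j = n + (n * m + j)" using Suc by simp
    ultimately show ?thesis using Suc pCons.IH[of m] pCons.prems
      by (simp add: expand coeff_monom_mult)
  qed
qed

lemma coeff_sum_pcompose_monom_mult:
  fixes P R :: "'b \<Rightarrow> 'a::comm_semiring_1 poly"
  assumes "\<And>l. l \<in> A \<Longrightarrow> degree (R l) < n" and "j < n"
  shows "coeff (\<Sum>l\<in>A. pcompose (P l) (monom 1 n) * R l) (n * i + j)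
    = (\<Sum>l\<in>A. coeff (P l) i * coeff (R l) j)"
  using assms by (simp add: coeff_sum coeff_pcompose_monom_mult)

lemma pcompose_power:
  fixes p q :: "'a::comm_semiring_1 poly"
  shows "pcompose (p ^ m) q = pcompose p q ^ m"
  by (induction m) (simp_all add: pcompose_mult pcompose_1)

lemma monom_minus_one_eq_pcompose:
  "monom (1::'a::comm_ring_1) n - 1 = pcompose [:-1, 1:] (monom 1 n)"
proof -
  have "[:-1::'a:] = - 1" by (simp add: one_pCons)
  then show ?thesis by (simp add: pcompose_pCons)
qed

definition euler_factor :: "nat \<Rightarrow> nat \<Rightarrow> int poly" where
  "euler_factor k l = eulerB (k - l) * [:-1, 1:] ^ l"

definition binom_factor :: "nat \<Rightarrow> nat \<Rightarrow> int poly" where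
  "binom_factor k l = (\<Sum>i=l..k. of_nat (i choose l) * monom 1 (k - i))"

lemma degree_binom_factor: "degree (binom_factor k l) \<le> k"
proof (rule degree_le, intro allI impI)
  fix m assume "k < m"
  then show "coeff (binom_factor k l) m = 0"
    unfolding binom_factor_def
    by (simp add: coeff_sum of_nat_poly coeff_monom) (intro sum.neutral, auto)
qed

lemma degree_monom_one_mult_binom_factor:
  "degree (monom 1 1 * binom_factor k l) \<le> k + 1"
  using degree_mult_le[of "monom 1 1" "binom_factor k l"] degree_binom_factor[of k l]
  by (simp add: degree_monom_eq)

lemma Ttilde_eq:
  "Ttilde k = (\<Sum>l=0..k. pcompose (euler_factor k l) (monom 1 (k + 1)) * binom_factor k l)"
  unfolding Ttilde_def euler_factor_def binom_factor_def
  by (simp add: pcompose_mult pcompose_power monom_minus_one_eq_pcompose)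

lemma Fk_eq:
  "Fk k = (\<Sum>l=0..k. pcompose (euler_factor k l) (monom 1 (k + 2)) * (monom 1 1 * binom_factor k l))"
proof -
  have "(\<Sum>i=l..k. of_nat (i choose l) * monom (1::int) (k + 1 - i)) = monom 1 1 * binom_factor k l"
    for l
    unfolding binom_factor_def sum_distrib_left
  proof (rule sum.cong[OF refl])
    fix i assume "i \<in> {l..k}"
    then have "k + 1 - i = 1 + (k - i)" by auto
    then show "of_nat (i choose l) * monom (1::int) (k + 1 - i)
        = monom 1 1 * (of_nat (i choose l) * monom 1 (k - i))"
      by (simp add: mult_monom algebra_simps)
  qed
  then show ?thesis
    unfolding Fk_def euler_factor_def
    by (simp add: pcompose_mult pcompose_power monom_minus_one_eq_pcompose)
qed

theorem lemma3p2:
  fixes k :: nat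
  shows "(\<forall>i\<le>k+1. fk k i 0 = 0) \<and> (\<forall>i\<le>k+1. \<forall>j\<le>k. fk k i (j+1) = tk k i j)"
proof (intro conjI allI impI)
  have degree_F: "degree (monom 1 1 * binom_factor k l) < k + 2" for l
    using degree_monom_one_mult_binom_factor[of k l] by simp
  have degree_T: "degree (binom_factor k l) < k + 1" for l
    using degree_binom_factor[of k l] by simp
  fix i :: nat
  show "fk k i 0 = 0"
    unfolding fk_def Fk_eq
    using coeff_sum_pcompose_monom_mult[where R="\<lambda>l. monom 1 1 * binom_factor k l" and j=0, OF degree_F]
    by (simp add: coeff_monom_mult)
  fix j assume "j \<le> k"
  have "fk k i (j + 1) = (\<Sum>l=0..k. coeff (euler_factor k l) i * coeff (binom_factor k l) j)"
    unfolding fk_def Fk_eq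
    using coeff_sum_pcompose_monom_mult[where R="\<lambda>l. monom 1 1 * binom_factor k l" and j="j + 1", OF degree_F] \<open>j \<le> k\<close>
    by (simp add: coeff_monom_mult)
  also have "\<dots> = tk k i j"
    unfolding tk_def Ttilde_eq
    using coeff_sum_pcompose_monom_mult[where R="binom_factor k" and j=j, OF degree_T] \<open>j \<le> k\<close> by simp
  finally show "fk k i (j + 1) = tk k i j" .
qed

end
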